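(* With $f$ as in the context (and $n\ge 3$), $\langle v_0\rangle=\{x\in V : x\wedge V\subseteq Vf\}$.
   Context: Let $p$ be a prime, $\mathbb{F}=\mathrm{GF}(p)$, and $n\ge 3$. Let $V$ be an $\mathbb{F}$-vector space with basis $v_0,\dots,v_n$, $U=\langle v_1,\dots,v_n\rangle$, $W=\Lambda^2V$, and for $x\in V$, $x\wedge V=\{x\wedge y:y\in V\}$. Maps are written on the right. The linear map $f:V\to W$ is given by $v_0f=\sum_{i=1}^n b_i\, v_0\wedge v_i+\sum_{1\le j<k\le n}c_{j,k}\, v_j\wedge v_k$ and $v_if=\sum_{j=1}^n A_{i,j}\, v_0\wedge v_j$ for $1\le i\le n$, where $b\in\mathbb{F}^n$ and $c=(c_{j,k})\in\mathbb{F}^{\binom n2}$ are nonzero, and $A$ is the $n\times n$ companion matrix of the minimal polynomial over $\mathbb{F}$ of a primitive element of $\mathrm{GF}(p^n)$. *)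

theory Defs
  imports "HOL-Library.Function_Algebras" "HOL-Library.Cardinality" "HOL-Computational_Algebra.Polynomial" "HOL-Computational_Algebra.Primes"
begin

text \<open>V = F^(n+1) is represented by functions nat => F that
vanish outside {0..n}; coordinate i is the coefficient of v_i.
W = Lambda^2 V is represented by functions on pairs (j,k); coordinate (j,k) with
j < k <= n is the coefficient of v_j wedge v_k (all other coordinates are 0).\<close>

definition vecV :: "nat \<Rightarrow> (nat \<Rightarrow> 'a::field) set" where
  "vecV n = {x. \<forall>i. n < i \<longrightarrow> x i = 0}"

definition basisV :: "nat \<Rightarrow> nat \<Rightarrow> 'a::field" where
  "basisV i = (\<lambda>l. if l = i then 1 else 0)"

definition wedge :: "nat \<Rightarrow> (nat \<Rightarrow> 'a::field) \<Rightarrow> (nat \<Rightarrow> 'a) \<Rightarrow> (nat \<times> nat \<Rightarrow> 'a)" where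
  "wedge n x y = (\<lambda>(j,k). if j < k \<and> k \<le> n then x j * y k - x k * y j else 0)"

definition basisW :: "nat \<Rightarrow> nat \<Rightarrow> (nat \<times> nat \<Rightarrow> 'a::field)" where
  "basisW j k = (\<lambda>jk. if jk = (j,k) then 1 else 0)"

definition scaleW :: "'a::field \<Rightarrow> (nat \<times> nat \<Rightarrow> 'a) \<Rightarrow> (nat \<times> nat \<Rightarrow> 'a)" where
  "scaleW s w = (\<lambda>jk. s * w jk)"

text \<open>The linear map f : V -> W, written on the right (x f), given on the basis.\<close>

definition f_v0 :: "nat \<Rightarrow> (nat \<Rightarrow> 'a::field) \<Rightarrow> (nat \<Rightarrow> nat \<Rightarrow> 'a) \<Rightarrow> (nat \<times> nat \<Rightarrow> 'a)" where
  "f_v0 n b c = (\<Sum>i\<in>{1..n}. scaleW (b i) (basisW 0 i))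
               + (\<Sum>(j,k)\<in>{(j,k). 1 \<le> j \<and> j < k \<and> k \<le> n}. scaleW (c j k) (basisW j k))"

definition f_vi :: "nat \<Rightarrow> (nat \<Rightarrow> nat \<Rightarrow> 'a::field) \<Rightarrow> nat \<Rightarrow> (nat \<times> nat \<Rightarrow> 'a)" where
  "f_vi n A i = (\<Sum>j\<in>{1..n}. scaleW (A i j) (basisW 0 j))"

definition fmap :: "nat \<Rightarrow> (nat \<Rightarrow> 'a::field) \<Rightarrow> (nat \<Rightarrow> nat \<Rightarrow> 'a) \<Rightarrow> (nat \<Rightarrow> nat \<Rightarrow> 'a)
                    \<Rightarrow> (nat \<Rightarrow> 'a) \<Rightarrow> (nat \<times> nat \<Rightarrow> 'a)" where
  "fmap n b c A x = scaleW (x 0) (f_v0 n b c) + (\<Sum>i\<in>{1..n}. scaleW (x i) (f_vi n A i))"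

text \<open>Companion matrix (indices 1..n) of a monic polynomial
q = x^n + a_(n-1) x^(n-1) + ... + a_0, in the row convention suited to maps on the
right: v_i A = v_(i+1) for i < n and v_n A = - sum_j a_(j-1) v_j.\<close>

definition companion :: "nat \<Rightarrow> 'a::field poly \<Rightarrow> nat \<Rightarrow> nat \<Rightarrow> 'a" where
  "companion n q i j = (if i < n then (if j = i + 1 then 1 else 0) else - coeff q (j - 1))"

definition ring_embedding :: "('a::field \<Rightarrow> 'b::field) \<Rightarrow> bool" where
  "ring_embedding \<phi> \<longleftrightarrow> \<phi> 1 = 1 \<and> (\<forall>x y. \<phi> (x + y) = \<phi> x + \<phi> y \<and> \<phi> (x * y) = \<phi> x * \<phi> y)"

definition primitive_element :: "'b::field \<Rightarrow> bool" where
  "primitive_element \<alpha> \<longleftrightarrow> range (\<lambda>k::nat. \<alpha> ^ k) = UNIV - {0}"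

definition is_minimal_polynomial :: "('a::field \<Rightarrow> 'b::field) \<Rightarrow> 'b \<Rightarrow> 'a poly \<Rightarrow> bool" where
  "is_minimal_polynomial \<phi> \<alpha> q \<longleftrightarrow>
     lead_coeff q = 1 \<and> poly (map_poly \<phi> q) \<alpha> = 0 \<and>
     (\<forall>r. r \<noteq> 0 \<and> poly (map_poly \<phi> r) \<alpha> = 0 \<longrightarrow> degree q \<le> degree r)"

end

theory Submission
  imports Defs
begin

text \<open>
  Write W = (v_0 \<wedge> U) \<oplus> (U \<wedge> U).  Every image vector z f has U \<wedge> U-component
  z_0 \<cdot> c, and for z_0 = 0 the vector z f = (z_1,...,z_n) A viewed inside v_0 \<wedge> U.

  (\<subseteq>) For x = t v_0 we have x \<wedge> y = t (y_1,...,y_n) inside v_0 \<wedge> U.  The companion matrix A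
      is invertible because the constant coefficient of the minimal polynomial q of the
      nonzero element \<alpha> is nonzero, so this vector equals z f for some z with z_0 = 0.
  (\<supseteq>) If x_m \<noteq> 0 for some m \<ge> 1, pick two further indices l_1 \<noteq> l_2 (here n \<ge> 3 is used).
      The U \<wedge> U-component of x \<wedge> v_l is supported on {m,l} and nonzero at {m,l}; being a
      multiple of c for both l = l_1 and l = l_2 is impossible.  Hence x \<in> \<langle>v_0\<rangle>.
\<close>

lemma sum_apply_fun: "(sum f A) x = (\<Sum>a\<in>A. f a x)"
  by (induction A rule: infinite_finite_induct) auto

lemma finite_UU_pairs: "finite {(j,k). 1 \<le> j \<and> j < k \<and> k \<le> (n::nat)}"
  by (rule finite_subset[of _ "{1..n} \<times> {1..n}"]) auto

lemma f_v0_apply: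
  "f_v0 n b c (j,k) = (if j = 0 \<and> 1 \<le> k \<and> k \<le> n then b k else 0)
     + (if 1 \<le> j \<and> j < k \<and> k \<le> n then c j k else 0)"
proof -
  have v0U: "(\<Sum>i\<in>{1..n}. scaleW (b i) (basisW 0 i)) (j,k)
      = (if j = 0 \<and> 1 \<le> k \<and> k \<le> n then b k else 0)"
    unfolding sum_apply_fun scaleW_def basisW_def
    by (simp add: sum.delta' if_distrib cong: if_cong) (auto intro!: sum.neutral)
  have "(\<Sum>(j',k')\<in>{(j,k). 1 \<le> j \<and> j < k \<and> k \<le> n}. scaleW (c j' k') (basisW j' k')) (j,k)
      = (\<Sum>a\<in>{(j,k). 1 \<le> j \<and> j < k \<and> k \<le> n}. if a = (j,k) then c j k else 0)"
    unfolding sum_apply_fun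
    by (rule sum.cong) (auto simp: scaleW_def basisW_def split: if_splits)
  also have "\<dots> = (if 1 \<le> j \<and> j < k \<and> k \<le> n then c j k else 0)"
    using finite_UU_pairs[of n] by (simp add: sum.delta)
  finally show ?thesis unfolding f_v0_def plus_fun_apply using v0U by simp
qed

lemma f_vi_apply:
  "f_vi n A i (j,k) = (if j = 0 \<and> 1 \<le> k \<and> k \<le> n then A i k else 0)"
  unfolding f_vi_def sum_apply_fun scaleW_def basisW_def
  by (simp add: sum.delta' if_distrib cong: if_cong) (auto intro!: sum.neutral)

lemma fmap_apply:
  "fmap n b c A z (j,k) = z 0 * ((if j = 0 \<and> 1 \<le> k \<and> k \<le> n then b k else 0)
     + (if 1 \<le> j \<and> j < k \<and> k \<le> n then c j k else 0))
     + (\<Sum>i\<in>{1..n}. z i * (if j = 0 \<and> 1 \<le> k \<and> k \<le> n then A i k else 0))"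
  unfolding fmap_def plus_fun_apply sum_apply_fun
  by (simp add: scaleW_def f_v0_apply f_vi_apply)

lemma fmap_UU_component:
  assumes "1 \<le> j" "j < k" "k \<le> n"
  shows "fmap n b c A z (j,k) = z 0 * c j k"
  using assms by (simp add: fmap_apply)

lemma fmap_without_v0:
  assumes "z 0 = 0"
  shows "fmap n b c A z = (\<lambda>(j,k). if j = 0 \<and> 1 \<le> k \<and> k \<le> n
                                     then \<Sum>i\<in>{1..n}. z i * A i k else 0)"
  using assms by (intro ext) (auto simp: fmap_apply)

lemma wedge_v0:
  "wedge n (\<lambda>l. t * basisV 0 l) y = (\<lambda>(j,k). if j = 0 \<and> 1 \<le> k \<and> k \<le> n then t * y k else 0)"
  by (auto simp: wedge_def basisV_def)

lemma wedge_basis_at_pair: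
  assumes "x m \<noteq> 0" "l \<noteq> m" "l \<le> n" "m \<le> n"
  shows "wedge n x (basisV l) (min m l, max m l) \<noteq> 0"
  using assms by (auto simp: wedge_def basisV_def min_def max_def)

lemma wedge_basis_off_pair:
  assumes "l \<noteq> j" "l \<noteq> k"
  shows "wedge n x (basisV l) (j,k) = 0"
  using assms by (simp add: wedge_def basisV_def)

lemma ring_embedding_zero:
  assumes "ring_embedding \<phi>"
  shows "\<phi> 0 = 0"
proof -
  have "\<phi> (0 + 0) = \<phi> 0 + \<phi> 0" using assms unfolding ring_embedding_def by blast
  then show ?thesis by (metis add.right_neutral add_left_cancel)
qed

lemma primitive_element_nonzero:
  assumes "primitive_element \<alpha>"
  shows "\<alpha> \<noteq> 0"
proof
  assume "\<alpha> = 0"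
  then have "0 \<in> range (\<lambda>k::nat. \<alpha> ^ k)" by (metis power_one_right rangeI)
  then show False using assms unfolding primitive_element_def by auto
qed

text \<open>The minimal polynomial of a nonzero element is not divisible by X: otherwise q/X
  would be a nonzero annihilating polynomial of smaller degree.\<close>

lemma minimal_polynomial_coeff0_nonzero:
  assumes "\<phi> 0 = 0" "\<alpha> \<noteq> 0" and min: "is_minimal_polynomial \<phi> \<alpha> q"
  shows "coeff q 0 \<noteq> 0"
proof
  assume "coeff q 0 = 0"
  then obtain r where q: "q = pCons 0 r" by (cases q) auto
  have "q \<noteq> 0" using min unfolding is_minimal_polynomial_def by auto
  then have "r \<noteq> 0" using q by auto
  have "\<alpha> * poly (map_poly \<phi> r) \<alpha> = 0"
    using min q assms(1) unfolding is_minimal_polynomial_def by (simp add: map_poly_pCons)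
  then have "poly (map_poly \<phi> r) \<alpha> = 0" using assms(2) by simp
  then have "degree q \<le> degree r" using min \<open>r \<noteq> 0\<close> unfolding is_minimal_polynomial_def by auto
  moreover have "degree q = Suc (degree r)" using q \<open>r \<noteq> 0\<close> by simp
  ultimately show False by simp
qed

lemma companion_rows_surjective:
  assumes "1 \<le> n" and q0: "coeff q 0 \<noteq> 0"
  obtains z where "z \<in> vecV n" "z 0 = 0"
    "\<And>k. 1 \<le> k \<Longrightarrow> k \<le> n \<Longrightarrow> (\<Sum>i\<in>{1..n}. z i * companion n q i k) = w k"
proof
  let ?A = "companion n q"
  define s where "s = - w 1 / coeff q 0"
  define z where "z = (\<lambda>i. if i = n then s else if 1 \<le> i \<and> i < n then w (Suc i) + s * coeff q i else 0)"
  show "z \<in> vecV n" "z 0 = 0" using assms(1) by (auto simp: z_def vecV_def)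
  fix k assume k: "1 \<le> k" "k \<le> n"
  have "{1..n} = insert n {1..<n}" using assms(1) by auto
  then have "(\<Sum>i\<in>{1..n}. z i * ?A i k) = z n * ?A n k + (\<Sum>i\<in>{1..<n}. z i * ?A i k)"
    by simp
  also have "(\<Sum>i\<in>{1..<n}. z i * ?A i k) = (\<Sum>i\<in>{1..<n}. if i = k - 1 then z i else 0)"
    by (rule sum.cong) (use k in \<open>auto simp: companion_def\<close>)
  also have "\<dots> = (if k - 1 \<in> {1..<n} then z (k - 1) else 0)"
    by (simp add: sum.delta)
  finally have row: "(\<Sum>i\<in>{1..n}. z i * ?A i k)
      = - s * coeff q (k - 1) + (if k - 1 \<in> {1..<n} then z (k - 1) else 0)"
    by (simp add: z_def companion_def)
  show "(\<Sum>i\<in>{1..n}. z i * ?A i k) = w k"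
  proof (cases "k = 1")
    case True
    then show ?thesis unfolding row using q0 by (simp add: s_def)
  next
    case False
    then have "k - 1 \<in> {1..<n}" "z (k - 1) = w k + s * coeff q (k - 1)"
      using k by (auto simp: z_def)
    then show ?thesis unfolding row by simp
  qed
qed

lemma v0_wedge_in_image:
  assumes "1 \<le> n" "coeff q 0 \<noteq> 0"
  shows "wedge n (\<lambda>l. t * basisV 0 l) y \<in> fmap n b c (companion n q) ` vecV n"
proof -
  obtain z where z: "z \<in> vecV n" "z 0 = 0"
    "\<And>k. 1 \<le> k \<Longrightarrow> k \<le> n \<Longrightarrow> (\<Sum>i\<in>{1..n}. z i * companion n q i k) = t * y k"
    using companion_rows_surjective[OF assms, where w = "\<lambda>k. t * y k"] by metis
  have eq: "fmap n b c (companion n q) z = wedge n (\<lambda>l. t * basisV 0 l) y"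
    unfolding fmap_without_v0[where z = z, OF z(2)] wedge_v0 using z(3) by (intro ext) auto
  show ?thesis using z(1) eq by (metis image_eqI)
qed

lemma two_other_indices:
  fixes m n :: nat
  assumes "3 \<le> n" "m \<in> {1..n}"
  obtains l1 l2 where "l1 \<in> {1..n}" "l2 \<in> {1..n}" "l1 \<noteq> l2" "l1 \<noteq> m" "l2 \<noteq> m"
proof -
  consider "m = 1" | "m = 2" | "3 \<le> m" using assms(2) by fastforce
  then show ?thesis
  proof cases
    case 1
    show ?thesis by (rule that[of 2 3]) (use 1 assms in auto)
  next
    case 2
    show ?thesis by (rule that[of 1 3]) (use 2 assms in auto)
  next
    case 3
    show ?thesis by (rule that[of 1 2]) (use 3 assms in auto)
  qed
qed

text \<open>If every x \<wedge> y has U \<wedge> U-component proportional to c, then x has no U-component: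
  x \<wedge> v_l has U \<wedge> U-support inside the pairs containing l and is nonzero at {m,l}.\<close>

lemma UU_proportional_forces_v0:
  assumes n: "3 \<le> n"
    and proportional: "\<And>y. y \<in> vecV n \<Longrightarrow>
               \<exists>s. \<forall>j k. 1 \<le> j \<and> j < k \<and> k \<le> n \<longrightarrow> wedge n x y (j,k) = s * c j k"
    and m: "1 \<le> m" "m \<le> n"
  shows "x m = 0"
proof (rule ccontr)
  assume xm: "x m \<noteq> 0"
  obtain l1 l2 where l: "l1 \<in> {1..n}" "l2 \<in> {1..n}" "l1 \<noteq> l2" "l1 \<noteq> m" "l2 \<noteq> m"
    using two_other_indices[OF n] m by auto
  have basis_in_V: "basisV l \<in> vecV n" if "l \<in> {1..n}" for l
    using that unfolding vecV_def basisV_def by auto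
  obtain s1 where s1: "\<forall>j k. 1 \<le> j \<and> j < k \<and> k \<le> n \<longrightarrow> wedge n x (basisV l1) (j,k) = s1 * c j k"
    using proportional[OF basis_in_V[OF l(1)]] by blast
  obtain s2 where s2: "\<forall>j k. 1 \<le> j \<and> j < k \<and> k \<le> n \<longrightarrow> wedge n x (basisV l2) (j,k) = s2 * c j k"
    using proportional[OF basis_in_V[OF l(2)]] by blast
  have pair1: "1 \<le> min m l1 \<and> min m l1 < max m l1 \<and> max m l1 \<le> n"
   and pair2: "1 \<le> min m l2 \<and> min m l2 < max m l2 \<and> max m l2 \<le> n" using l m by auto
  have at1: "wedge n x (basisV l1) (min m l1, max m l1) \<noteq> 0"
    using wedge_basis_at_pair[of x m l1 n] xm l m by auto
  have at2: "wedge n x (basisV l2) (min m l2, max m l2) \<noteq> 0"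
    using wedge_basis_at_pair[of x m l2 n] xm l m by auto
  have off: "wedge n x (basisV l2) (min m l1, max m l1) = 0"
    by (rule wedge_basis_off_pair) (use l in \<open>auto simp: min_def max_def\<close>)
  have "c (min m l1) (max m l1) \<noteq> 0"
    using at1 s1 pair1 by (metis mult_zero_right)
  moreover have "s2 * c (min m l1) (max m l1) = 0"
    using off s2 pair1 by metis
  ultimately have "s2 = 0" by simp
  moreover have "s2 * c (min m l2) (max m l2) \<noteq> 0"
    using at2 s2 pair2 by metis
  ultimately show False by simp
qed

lemma vector_in_v0_line:
  assumes "x \<in> vecV n" "\<And>m. 1 \<le> m \<Longrightarrow> m \<le> n \<Longrightarrow> x m = 0"
  shows "x = (\<lambda>l. x 0 * basisV 0 l)"
proof (rule ext)
  fix l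
  show "x l = x 0 * basisV 0 l"
    using assms unfolding vecV_def basisV_def
    by (cases "l = 0"; cases "l \<le> n") auto
qed

theorem lemma3p2:
  fixes p n :: nat
    and b :: "nat \<Rightarrow> 'a::{field,finite}"
    and c :: "nat \<Rightarrow> nat \<Rightarrow> 'a"
    and \<phi> :: "'a \<Rightarrow> 'b::{field,finite}"
    and \<alpha> :: 'b
    and q :: "'a poly"
  assumes "prime p" and "CARD('a) = p" and "n \<ge> 3"
    and "CARD('b) = p ^ n" and "ring_embedding \<phi>"
    and "primitive_element \<alpha>" and "is_minimal_polynomial \<phi> \<alpha> q"
    and "\<exists>i\<in>{1..n}. b i \<noteq> 0"
    and "\<exists>j k. 1 \<le> j \<and> j < k \<and> k \<le> n \<and> c j k \<noteq> 0"
  shows "{(\<lambda>l. t * basisV 0 l) | t. True} =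
         {x \<in> vecV n. \<forall>y \<in> vecV n. wedge n x y \<in> fmap n b c (companion n q) ` vecV n}"
proof (rule equalityI)
  have q0: "coeff q 0 \<noteq> 0"
    using minimal_polynomial_coeff0_nonzero ring_embedding_zero primitive_element_nonzero assms(5-7)
    by blast
  have "(\<lambda>l. t * basisV 0 l) \<in> vecV n" for t :: 'a
    by (simp add: vecV_def basisV_def)
  then show "{(\<lambda>l. t * basisV 0 l) | t. True}
      \<subseteq> {x \<in> vecV n. \<forall>y \<in> vecV n. wedge n x y \<in> fmap n b c (companion n q) ` vecV n}"
    using v0_wedge_in_image[OF _ q0] assms(3) by auto
next
  show "{x \<in> vecV n. \<forall>y \<in> vecV n. wedge n x y \<in> fmap n b c (companion n q) ` vecV n}
      \<subseteq> {(\<lambda>l. t * basisV 0 l) | t. True}"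
  proof (rule subsetI)
    fix x assume "x \<in> {x \<in> vecV n. \<forall>y \<in> vecV n. wedge n x y \<in> fmap n b c (companion n q) ` vecV n}"
    then have x: "x \<in> vecV n" "\<forall>y \<in> vecV n. wedge n x y \<in> fmap n b c (companion n q) ` vecV n"
      by auto
    have "\<exists>s. \<forall>j k. 1 \<le> j \<and> j < k \<and> k \<le> n \<longrightarrow> wedge n x y (j,k) = s * c j k"
      if "y \<in> vecV n" for y
      using x(2) that by (force simp: fmap_UU_component)
    then have "x = (\<lambda>l. x 0 * basisV 0 l)"
      using vector_in_v0_line[OF x(1)] UU_proportional_forces_v0[OF assms(3)] by blast
    then show "x \<in> {(\<lambda>l. t * basisV 0 l) | t. True}" by blast
  qed
qed

end
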